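(* Let $m\mid n$, $s=n/m$, $\alpha$ a primitive element of $\mathbb{F}_{q^n}$, $l$ an integer with $1\le l<\frac{q^n-1}{q^m-1}$, $L$ the degree of the minimal polynomial of $\alpha^l$ over $\mathbb{F}_{q^m}$, and $\mathcal{F}=(\mathcal{F}_1,\dots,\mathcal{F}_r)$, $r\ge2$, the flag of type $(ms_1,\dots,ms_r)$ with $1\le s_1<\dots<s_r\le L$, $s_r<s$, and $\mathcal{F}_i=\bigoplus_{j=0}^{s_i-1}\mathbb{F}_{q^m}\alpha^{lj}$. Then: (1) $d_f(\mathrm{Orb}(\mathcal{F}))=2m$ if and only if the type of $\mathcal{F}$ is $(ms_1,mL)$ (so $r=2$, $s_2=L$) for some $1\le s_1<L<s$. Moreover, if in this case $s_1=1$, then $\mathcal{F}=(\mathbb{F}_{q^m},\mathbb{F}_{q^{mL}})$ is the Galois flag of type $(m,mL)$. (2) $\mathrm{Orb}(\mathcal{F})$ is an optimum distance flag code if and only if $L=s$ and the type of $\mathcal{F}$ is $(m,m(L-1))$. In this case $\mathrm{Orb}(\mathcal{F})$ is a generalized Galois flag code with the largest possible size $\frac{q^n-1}{q^m-1}$.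
   Context: $q$ prime power; subspaces are $\mathbb{F}_q$-subspaces of $\mathbb{F}_{q^n}$; a flag is a chain $\{0\}\subsetneq\mathcal{F}_1\subsetneq\cdots\subsetneq\mathcal{F}_r\subsetneq\mathbb{F}_{q^n}$ with type its vector of dimensions. $d_S(\mathcal{U},\mathcal{V})=\dim(\mathcal{U}+\mathcal{V})-\dim(\mathcal{U}\cap\mathcal{V})$, $d_f(\mathcal{F},\mathcal{F}')=\sum_i d_S(\mathcal{F}_i,\mathcal{F}'_i)$, $\mathrm{Orb}(\mathcal{F})=\{\mathcal{F}\alpha^j:j\ge0\}$ where $\mathcal{F}\alpha^j=(\mathcal{F}_1\alpha^j,\dots,\mathcal{F}_r\alpha^j)$; the minimum distance of a code is the minimum $d_f$ between distinct codewords. A flag code of type $(t_1,\dots,t_r)$ is an optimum distance flag code if its minimum distance equals $2(\sum_{t_i\le\lfloor n/2\rfloor}t_i+\sum_{t_i>\lfloor n/2\rfloor}(n-t_i))$. The Galois flag of type $(t_1,\dots,t_r)$ (with $t_i\mid t_{i+1}$, $t_i\mid n$) is $(\mathbb{F}_{q^{t_1}},\dots,\mathbb{F}_{q^{t_r}})$. A generalized Galois flag is a flag having at least one subspace that is a subfield of $\mathbb{F}_{q^n}$ and at least one that is not; a generalized Galois flag code is its orbit. *)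

theory Defs
  imports "HOL-Computational_Algebra.Polynomial" "HOL-Computational_Algebra.Primes"
begin

text \<open>Ambient field F_{q^n} is a finite field type 'a with CARD('a) = q^n.\<close>

definition prime_power :: "nat \<Rightarrow> bool" where
  "prime_power q \<longleftrightarrow> (\<exists>p k. prime p \<and> k > 0 \<and> q = p ^ k)"

definition subfield_of_order :: "nat \<Rightarrow> nat \<Rightarrow> 'a::{finite,field} set" where
  "subfield_of_order q k = {x. x ^ (q ^ k) = x}"

definition dimq :: "nat \<Rightarrow> 'a::{finite,field} set \<Rightarrow> nat" where
  "dimq q U = (THE d. card U = q ^ d)"

definition subspace_sum :: "'a::{finite,field} set \<Rightarrow> 'a set \<Rightarrow> 'a set" where
  "subspace_sum U V = {u + v | u v. u \<in> U \<and> v \<in> V}"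

definition subspace_dist :: "nat \<Rightarrow> 'a::{finite,field} set \<Rightarrow> 'a set \<Rightarrow> nat" where
  "subspace_dist q U V = dimq q (subspace_sum U V) - dimq q (U \<inter> V)"

definition flag_dist :: "nat \<Rightarrow> 'a::{finite,field} set list \<Rightarrow> 'a set list \<Rightarrow> nat" where
  "flag_dist q F G = (\<Sum>i<length F. subspace_dist q (F ! i) (G ! i))"

definition flag_type :: "nat \<Rightarrow> 'a::{finite,field} set list \<Rightarrow> nat list" where
  "flag_type q F = map (dimq q) F"

definition orbit_flag :: "'a::{finite,field} \<Rightarrow> 'a set list \<Rightarrow> 'a set list set" where
  "orbit_flag \<alpha> F = {map (\<lambda>U. (\<lambda>x. x * \<alpha> ^ j) ` U) F | j. True}"

definition code_min_dist :: "nat \<Rightarrow> 'a::{finite,field} set list set \<Rightarrow> nat" where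
  "code_min_dist q C = Min {flag_dist q F G | F G. F \<in> C \<and> G \<in> C \<and> F \<noteq> G}"

definition optimum_distance_flag_code ::
  "nat \<Rightarrow> nat \<Rightarrow> nat list \<Rightarrow> 'a::{finite,field} set list set \<Rightarrow> bool" where
  "optimum_distance_flag_code q n typ C \<longleftrightarrow>
     code_min_dist q C = 2 * (\<Sum>t\<leftarrow>typ. if t \<le> n div 2 then t else n - t)"

definition primitive_element :: "'a::{finite,field} \<Rightarrow> bool" where
  "primitive_element \<alpha> \<longleftrightarrow> (\<forall>x. x \<noteq> 0 \<longrightarrow> (\<exists>j. x = \<alpha> ^ j))"

definition minpoly_degree :: "'a::{finite,field} set \<Rightarrow> 'a \<Rightarrow> nat" where
  "minpoly_degree K b = (LEAST d. \<exists>p. p \<noteq> 0 \<and> degree p = d \<and> (\<forall>i. coeff p i \<in> K) \<and> poly p b = 0)"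

definition is_subfield :: "'a::{finite,field} set \<Rightarrow> bool" where
  "is_subfield S \<longleftrightarrow> 0 \<in> S \<and> 1 \<in> S \<and> (\<forall>x\<in>S. \<forall>y\<in>S. x + y \<in> S \<and> x * y \<in> S)
      \<and> (\<forall>x\<in>S. - x \<in> S) \<and> (\<forall>x\<in>S. x \<noteq> 0 \<longrightarrow> inverse x \<in> S)"

definition generalized_Galois_flag :: "'a::{finite,field} set list \<Rightarrow> bool" where
  "generalized_Galois_flag F \<longleftrightarrow> (\<exists>U\<in>set F. is_subfield U) \<and> (\<exists>U\<in>set F. \<not> is_subfield U)"

text \<open>F_i = direct sum over j < s_i of F_{q^m} alpha^(l j).\<close>
definition power_span :: "'a::{finite,field} set \<Rightarrow> 'a \<Rightarrow> nat \<Rightarrow> 'a set" where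
  "power_span K b k = {\<Sum>j<k. c j * b ^ j | c. \<forall>j<k. c j \<in> K}"

end

theory Submission
  imports Defs
begin

text \<open>
  Write K for the subfield of order q^m, b = \<alpha>^l and V_t = K + K b + ... + K b^(t-1).
  By minimality of L the powers 1, b, ..., b^(L-1) are independent over K, so
  dim_K V_t = t for t \<le> L, and V_L is the subfield of order q^(mL). The orbit of the
  flag consists of its multiples by the nonzero y, and for 1 \<le> t < L the stabiliser of
  V_t is K. So every y \<notin> K moves each V_(s_i) with s_i < L, at a cost of at least 2m,
  while y = b costs exactly that: V_t and b V_t share b V_(t-1) and lie in V_(t+1), and
  b V_L = V_L. Hence the minimum distance is 2m(r - 1), plus 2m if s_r < L, and both
  characterisations follow by comparing this with 2m and with the optimum bound
  2m \<Sum>_i min(s_i, s - s_i), each summand of which is at least 2m. The orbit has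
  (q^n - 1)/(q^m - 1) elements because the stabiliser of the whole flag is K - {0}.
\<close>

section \<open>Finite fields and their subfields\<close>

lemma power_card_eq_one_if_mult_closed:
  fixes x :: "'a::field"
  assumes T: "finite T" "0 \<notin> T" "\<And>a b. a \<in> T \<Longrightarrow> b \<in> T \<Longrightarrow> a * b \<in> T" and x: "x \<in> T"
  shows "x ^ card T = 1"
proof -
  have inj: "inj_on ((*) x) T" using x T(2) by (auto simp: inj_on_def)
  have "(*) x ` T \<subseteq> T" using T(3) x by auto
  then have "(*) x ` T = T" using card_image[OF inj] T(1) by (metis card_subset_eq finite_imageI)
  then have "\<Prod>T = (\<Prod>y\<in>T. x * y)" using prod.reindex[OF inj, of id] by simp
  also have "\<dots> = x ^ card T * \<Prod>T" by (simp add: prod.distrib)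
  finally have "\<Prod>T * 1 = \<Prod>T * x ^ card T" by (simp add: mult.commute)
  moreover have "\<Prod>T \<noteq> 0" using T by auto
  ultimately show ?thesis by (metis mult_left_cancel)
qed

lemma power_card_minus_one:
  assumes "(x::'a::{finite,field}) \<noteq> 0"
  shows "x ^ (card (UNIV::'a set) - 1) = 1"
proof -
  have "x ^ card (UNIV - {0::'a}) = 1"
    by (rule power_card_eq_one_if_mult_closed) (use assms in auto)
  then show ?thesis by (simp add: card_Diff_singleton)
qed

lemma power_card_UNIV_eq_self: "(x::'a::{finite,field}) ^ card (UNIV::'a set) = x"
proof (cases "x = 0")
  case False
  then have "x ^ Suc (card (UNIV::'a set) - 1) = x" using power_card_minus_one by simp
  then show ?thesis using finite_UNIV_card_ge_0[where 'a='a] by simp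
qed (use finite_UNIV_card_ge_0[where 'a='a] in simp)

lemma card_fixed_points_le:
  assumes "1 < N"
  shows "card {x::'a::{finite,field}. x ^ N = x} \<le> N"
proof -
  define P :: "'a poly" where "P = monom 1 N - monom 1 1"
  have "coeff P N = 1" using assms by (simp add: P_def coeff_monom)
  then have "P \<noteq> 0" by auto
  moreover have "degree P \<le> N" unfolding P_def
    using assms by (intro degree_diff_le) (auto intro: order.trans[OF degree_monom_le])
  moreover have "{x::'a. x ^ N = x} = {x. poly P x = 0}" by (auto simp: P_def poly_monom)
  ultimately show ?thesis using card_poly_roots_bound by fastforce
qed

lemma mult_closed_eq_fixed_points:
  fixes T :: "'a::{finite,field} set"
  assumes "0 \<in> T" "\<And>a b. a \<in> T \<Longrightarrow> b \<in> T \<Longrightarrow> a * b \<in> T" "1 < card T"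
  shows "T = {x. x ^ card T = x}"
proof -
  have "x ^ card T = x" if "x \<in> T" for x
  proof (cases "x = 0")
    case False
    have "x ^ card (T - {0}) = 1"
      by (rule power_card_eq_one_if_mult_closed) (use assms that False in auto)
    then have "x ^ Suc (card (T - {0})) = x" by simp
    then show ?thesis using assms(1,3) by (simp add: card_Diff_singleton)
  qed (use assms in simp)
  then have sub: "T \<subseteq> {x. x ^ card T = x}" by blast
  moreover have "card {x::'a. x ^ card T = x} \<le> card T" by (rule card_fixed_points_le[OF assms(3)])
  ultimately show ?thesis by (simp add: card_seteq)
qed

lemma of_nat_card_UNIV: "of_nat (card (UNIV::'a::{finite,field} set)) = (0::'a)"
proof -
  \<comment> \<open>translation by 1 permutes the field, so the sum of all elements is unchanged\<close>
  have "(\<Sum>y\<in>UNIV. y + 1) = (\<Sum>y\<in>(UNIV::'a set). y)"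
    by (rule sum.reindex_bij_witness[of _ "\<lambda>y. y - 1" "\<lambda>y. y + 1"]) auto
  then show ?thesis by (simp add: sum.distrib)
qed

lemma prime_power_ge_2:
  assumes "prime_power q" shows "2 \<le> q"
proof -
  obtain p k where "prime p" "0 < k" "q = p ^ k" using assms unfolding prime_power_def by blast
  then show ?thesis using prime_ge_2_nat[of p] self_le_power[of p k] by simp
qed

lemma frobenius_add:
  assumes "prime_power q" "card (UNIV :: 'a::{finite,field} set) = q ^ n"
  shows "(x + y :: 'a) ^ (q ^ k) = x ^ (q ^ k) + y ^ (q ^ k)"
proof -
  obtain p e where pe: "prime p" "q = p ^ e" using assms(1) unfolding prime_power_def by blast
  have prime_char: "prime CHAR('a)"
    by (rule prime_CHAR_semidom) (rule finite_imp_CHAR_pos, simp)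
  have "of_nat (p ^ (e * n)) = (0::'a)"
    using of_nat_card_UNIV[where 'a='a] assms(2) pe by (simp add: power_mult)
  then have "CHAR('a) dvd p ^ (e * n)" by (rule of_nat_eq_0_iff_char_dvd[THEN iffD1])
  then have "CHAR('a) = p" using prime_char pe(1) prime_dvd_power primes_dvd_imp_eq by blast
  then have "q ^ k = CHAR('a) ^ (e * k)" using pe(2) by (simp add: power_mult)
  then show ?thesis using freshmans_dream'[OF prime_char] by blast
qed

lemma is_subfield_fixed_points:
  fixes N :: nat
  assumes add: "\<And>x y::'a::{finite,field}. (x + y) ^ N = x ^ N + y ^ N" and N: "0 < N"
  shows "is_subfield {x::'a. x ^ N = x}"
proof -
  have "(1 + (-1::'a)) ^ N = 0" using N by simp
  then have minus_one: "(-1::'a) ^ N = -1" unfolding add by (simp add: add_eq_0_iff)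
  have neg: "(-x::'a) ^ N = - (x ^ N)" for x
    using power_mult_distrib[of "-1" x N] by (simp add: minus_one)
  show ?thesis
    unfolding is_subfield_def
  proof (intro conjI ballI impI; simp only: mem_Collect_eq)
    show "(0::'a) ^ N = 0" using N by simp
  next
    fix x y :: 'a assume "x ^ N = x" "y ^ N = y"
    then show "(x + y) ^ N = x + y" "(x * y) ^ N = x * y"
      by (simp_all only: add power_mult_distrib)
  next
    fix x :: 'a assume "x ^ N = x"
    then show "(-x) ^ N = -x" "inverse x ^ N = inverse x"
      by (simp_all only: neg power_inverse)
  qed simp
qed

lemma is_subfield_subfield_of_order:
  assumes "prime_power q" "card (UNIV :: 'a::{finite,field} set) = q ^ n"
  shows "is_subfield (subfield_of_order q k :: 'a set)"
  unfolding subfield_of_order_def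
  by (rule is_subfield_fixed_points[OF frobenius_add[OF assms]])
    (use prime_power_ge_2[OF assms(1)] in simp)

lemma primitive_element_nonzero:
  assumes prim: "primitive_element (\<alpha>::'a::{finite,field})" and card: "2 < card (UNIV :: 'a set)"
  shows "\<alpha> \<noteq> 0"
proof
  assume "\<alpha> = 0"
  then have "x \<in> {0, 1}" for x :: 'a
    using prim unfolding primitive_element_def by (metis insertCI power_0_left)
  then have "card (UNIV :: 'a set) \<le> card {0::'a, 1}" by (intro card_mono) auto
  then show False using card by (simp add: card_insert_le_m1)
qed

lemma inj_on_primitive_element_powers:
  assumes prim: "primitive_element (\<alpha>::'a::{finite,field})" and "\<alpha> \<noteq> 0"
  shows "inj_on (\<lambda>i. \<alpha> ^ i) {..<card (UNIV :: 'a set) - 1}"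
proof (rule eq_card_imp_inj_on)
  define N where "N = card (UNIV :: 'a set) - 1"
  have "0 < N" using card_mono[of UNIV "{0::'a, 1}"] by (simp add: N_def)
  have "UNIV - {0} \<subseteq> (\<lambda>i. \<alpha> ^ i) ` {..<N}"
  proof
    fix x :: 'a assume "x \<in> UNIV - {0}"
    then obtain j where j: "x = \<alpha> ^ j" using prim unfolding primitive_element_def by blast
    have "\<alpha> ^ j = \<alpha> ^ (N * (j div N) + j mod N)" by (simp only: mult_div_mod_eq)
    also have "\<dots> = (\<alpha> ^ N) ^ (j div N) * \<alpha> ^ (j mod N)" by (simp only: power_add power_mult)
    then have "x = \<alpha> ^ (j mod N)"
      using j power_card_minus_one[OF assms(2)] by (simp add: N_def)
    then show "x \<in> (\<lambda>i. \<alpha> ^ i) ` {..<N}" using \<open>0 < N\<close> by auto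
  qed
  then have "N \<le> card ((\<lambda>i. \<alpha> ^ i) ` {..<N})"
    using card_mono[of "(\<lambda>i. \<alpha> ^ i) ` {..<N}" "UNIV - {0}"] by (simp add: N_def card_Diff_singleton)
  then show "card ((\<lambda>i. \<alpha> ^ i) ` {..<N}) = card {..<N}"
    using card_image_le[of "{..<N}" "\<lambda>i. \<alpha> ^ i"] by simp
qed simp

lemma dvd_power_minus_one: "(a - 1) dvd (a ^ s - (1::nat))"
proof (induction s)
  case (Suc s)
  have "a ^ Suc s - 1 = a * (a ^ s - 1) + (a - 1)"
    by (cases "a = 0") (simp_all add: algebra_simps diff_mult_distrib2)
  then show ?case using Suc by simp
qed simp

lemma card_subfield_of_order:
  assumes q: "prime_power q" and card: "card (UNIV :: 'a::{finite,field} set) = q ^ n"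
    and mn: "m dvd n" and prim: "primitive_element (\<alpha>::'a)" and \<alpha>: "\<alpha> \<noteq> 0"
  shows "card (subfield_of_order q m :: 'a set) = q ^ m"
proof (rule antisym)
  define Q where "Q = q ^ m"
  have "2 \<le> card (UNIV :: 'a set)" using card_mono[of UNIV "{0::'a, 1}"] by simp
  then have "n \<noteq> 0" using card by (cases n) auto
  then have "m \<noteq> 0" using mn by (metis dvd_0_left_iff)
  then have Q: "1 < Q" using prime_power_ge_2[OF q] unfolding Q_def by (intro one_less_power) auto
  then show "card (subfield_of_order q m :: 'a set) \<le> q ^ m"
    using card_fixed_points_le[of Q] by (simp add: subfield_of_order_def Q_def)
  \<comment> \<open>the powers \<open>\<alpha>^(M k)\<close>, \<open>k < Q - 1\<close>, with \<open>M (Q - 1) = card UNIV - 1\<close>,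
    are distinct fixed points of \<open>x \<mapsto> x^Q\<close>\<close>
  define N where "N = card (UNIV :: 'a set) - 1"
  define M where "M = N div (Q - 1)"
  obtain s where "n = m * s" using mn by blast
  then have "N = Q ^ s - 1" using card by (simp add: N_def Q_def power_mult)
  then have N: "N = M * (Q - 1)"
    unfolding M_def using dvd_div_mult_self[OF dvd_power_minus_one[of Q s]] by simp
  have "0 < N" using card_mono[of UNIV "{0::'a, 1}"] by (simp add: N_def)
  then have "0 < M" using N by (cases M) auto
  have "(\<alpha> ^ (M * k)) ^ Q = \<alpha> ^ (M * k)" for k
  proof -
    have "M * k * Q = M * k + N * k" using N Q by (simp add: algebra_simps diff_mult_distrib2)
    then have "(\<alpha> ^ (M * k)) ^ Q = \<alpha> ^ (M * k) * (\<alpha> ^ N) ^ k"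
      by (simp add: power_add flip: power_mult)
    then show ?thesis using power_card_minus_one[OF \<alpha>] by (simp add: N_def)
  qed
  then have sub: "insert 0 ((\<lambda>k. \<alpha> ^ (M * k)) ` {..<Q - 1}) \<subseteq> subfield_of_order q m"
    using prime_power_ge_2[OF q] by (auto simp: subfield_of_order_def Q_def)
  have "inj_on ((\<lambda>i. \<alpha> ^ i) \<circ> (\<lambda>k. M * k)) {..<Q - 1}"
  proof (rule comp_inj_on)
    show "inj_on ((*) M) {..<Q - 1}" using \<open>0 < M\<close> by (simp add: inj_on_def)
    have "(*) M ` {..<Q - 1} \<subseteq> {..<N}" using N \<open>0 < M\<close> by auto
    then show "inj_on (\<lambda>i. \<alpha> ^ i) ((*) M ` {..<Q - 1})"
      using inj_on_primitive_element_powers[OF prim \<alpha>] by (simp add: N_def inj_on_subset)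
  qed
  moreover have "0 \<notin> (\<lambda>k. \<alpha> ^ (M * k)) ` {..<Q - 1}" using \<alpha> by auto
  ultimately have "card (insert 0 ((\<lambda>k. \<alpha> ^ (M * k)) ` {..<Q - 1})) = Q"
    using Q by (simp add: card_image comp_def)
  then show "q ^ m \<le> card (subfield_of_order q m :: 'a set)"
    using card_mono[OF _ sub] by (simp add: Q_def)
qed

section \<open>Subspaces over a finite subfield\<close>

definition subspace_over :: "'a::field set \<Rightarrow> 'a set \<Rightarrow> bool" where
  "subspace_over K U \<longleftrightarrow> 0 \<in> U \<and> (\<forall>x\<in>U. \<forall>y\<in>U. x + y \<in> U) \<and> (\<forall>c\<in>K. \<forall>x\<in>U. c * x \<in> U)"

definition scale :: "'a::field set \<Rightarrow> 'a \<Rightarrow> 'a set" where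
  "scale U y = (\<lambda>x. x * y) ` U"

lemma card_scale: "y \<noteq> 0 \<Longrightarrow> card (scale U y) = card U"
  unfolding scale_def by (rule card_image) (auto simp: inj_on_def)

lemma scale_scale: "scale (scale U a) b = scale U (a * b)"
  unfolding scale_def by (auto simp: image_image mult.assoc)

lemma scale_one [simp]: "scale U 1 = U"
  unfolding scale_def by simp

lemma scale_subspace_sum: "scale (subspace_sum U V) c = subspace_sum (scale U c) (scale V c)"
  unfolding scale_def subspace_sum_def by (force simp: distrib_right)

lemma scale_Int: "c \<noteq> 0 \<Longrightarrow> scale (U \<inter> V) c = scale U c \<inter> scale V c"
  unfolding scale_def by (auto simp: image_Int inj_on_def)

lemma subspace_dist_scale:
  fixes U V :: "'a::{finite,field} set"
  assumes "c \<noteq> 0"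
  shows "subspace_dist q (scale U c) (scale V c) = subspace_dist q U V"
  unfolding subspace_dist_def dimq_def scale_subspace_sum[symmetric] scale_Int[OF assms, symmetric]
  by (simp add: card_scale[OF assms])

lemma dimq_eq: "2 \<le> q \<Longrightarrow> card U = q ^ d \<Longrightarrow> dimq q U = d"
  unfolding dimq_def by (rule the_equality) (auto dest: power_inject_exp)

locale finite_subfield =
  fixes K :: "'a::{finite,field} set"
  assumes is_subfield: "is_subfield K"
begin

lemma zero_mem: "0 \<in> K" and one_mem: "1 \<in> K"
  and add_mem: "x \<in> K \<Longrightarrow> y \<in> K \<Longrightarrow> x + y \<in> K"
  and mult_mem: "x \<in> K \<Longrightarrow> y \<in> K \<Longrightarrow> x * y \<in> K"
  and uminus_mem: "x \<in> K \<Longrightarrow> - x \<in> K"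
  and inverse_mem: "x \<in> K \<Longrightarrow> inverse x \<in> K"
  using is_subfield unfolding is_subfield_def by auto

lemma diff_mem: "x \<in> K \<Longrightarrow> y \<in> K \<Longrightarrow> x - y \<in> K"
  using add_mem[OF _ uminus_mem] by simp

lemma card_ge_2: "2 \<le> card K"
  using card_mono[of K "{0, 1}"] zero_mem one_mem by simp

context
  fixes U :: "'a set"
  assumes U: "subspace_over K U"
begin

lemma subspace_zero: "0 \<in> U"
  and subspace_add: "x \<in> U \<Longrightarrow> y \<in> U \<Longrightarrow> x + y \<in> U"
  and subspace_smult: "c \<in> K \<Longrightarrow> x \<in> U \<Longrightarrow> c * x \<in> U"
  using U unfolding subspace_over_def by auto

lemma subspace_diff: "x \<in> U \<Longrightarrow> y \<in> U \<Longrightarrow> x - y \<in> U"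
  using subspace_add[OF _ subspace_smult[OF uminus_mem[OF one_mem]]] by simp

lemma subspace_sum_mem: "(\<And>i. i \<in> I \<Longrightarrow> f i \<in> U) \<Longrightarrow> sum f I \<in> U"
  by (induction I rule: infinite_finite_induct) (auto intro: subspace_zero subspace_add)

lemma scale_eq_self: "y \<in> K \<Longrightarrow> y \<noteq> 0 \<Longrightarrow> scale U y = U"
  using card_scale[of y U] subspace_smult
  by (metis (no_types, lifting) card_subset_eq finite image_subsetI mult.commute scale_def)

lemma subspace_over_scale: "subspace_over K (scale U y)"
  unfolding subspace_over_def scale_def
proof (intro conjI ballI)
  show "0 \<in> (\<lambda>x. x * y) ` U" using subspace_zero by force
next
  fix a b assume "a \<in> (\<lambda>x. x * y) ` U" "b \<in> (\<lambda>x. x * y) ` U"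
  then obtain u v where "a = u * y" "b = v * y" "u \<in> U" "v \<in> U" by blast
  then show "a + b \<in> (\<lambda>x. x * y) ` U"
    using subspace_add by (auto simp: distrib_right intro!: image_eqI[of _ _ "u + v"])
next
  fix c a assume "c \<in> K" "a \<in> (\<lambda>x. x * y) ` U"
  then show "c * a \<in> (\<lambda>x. x * y) ` U"
    using subspace_smult by (auto simp: mult.assoc)
qed

end

lemma subspace_over_Int: "subspace_over K U \<Longrightarrow> subspace_over K V \<Longrightarrow> subspace_over K (U \<inter> V)"
  by (simp add: subspace_over_def)

lemma subspace_over_subspace_sum:
  assumes U: "subspace_over K U" and V: "subspace_over K V"
  shows "subspace_over K (subspace_sum U V)"
  unfolding subspace_over_def subspace_sum_def
proof (intro conjI ballI)
  show "0 \<in> {u + v |u v. u \<in> U \<and> v \<in> V}"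
    using subspace_zero[OF U] subspace_zero[OF V] by force
next
  fix x y assume "x \<in> {u + v |u v. u \<in> U \<and> v \<in> V}" "y \<in> {u + v |u v. u \<in> U \<and> v \<in> V}"
  then obtain u v u' v' where "x = u + v" "y = u' + v'" "u \<in> U" "v \<in> V" "u' \<in> U" "v' \<in> V"
    by blast
  then show "x + y \<in> {u + v |u v. u \<in> U \<and> v \<in> V}"
    by (intro CollectI exI[of _ "u + u'"] exI[of _ "v + v'"])
      (auto simp: subspace_add[OF U] subspace_add[OF V] algebra_simps)
next
  fix c x assume c: "c \<in> K" and "x \<in> {u + v |u v. u \<in> U \<and> v \<in> V}"
  then obtain u v where "x = u + v" "u \<in> U" "v \<in> V" by blast
  then show "c * x \<in> {u + v |u v. u \<in> U \<and> v \<in> V}"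
    using c by (intro CollectI exI[of _ "c * u"] exI[of _ "c * v"])
      (auto simp: subspace_smult[OF U] subspace_smult[OF V] algebra_simps)
qed

lemma subspace_over_extend:
  assumes W: "subspace_over K W"
  shows "subspace_over K {w + c * u | w c. w \<in> W \<and> c \<in> K}"
  unfolding subspace_over_def
proof (intro conjI ballI)
  show "0 \<in> {w + c * u |w c. w \<in> W \<and> c \<in> K}"
    using subspace_zero[OF W] zero_mem by force
next
  fix x y assume "x \<in> {w + c * u |w c. w \<in> W \<and> c \<in> K}" "y \<in> {w + c * u |w c. w \<in> W \<and> c \<in> K}"
  then obtain w c w' c' where "x = w + c * u" "y = w' + c' * u" "w \<in> W" "c \<in> K" "w' \<in> W" "c' \<in> K"
    by blast
  then show "x + y \<in> {w + c * u |w c. w \<in> W \<and> c \<in> K}"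
    by (intro CollectI exI[of _ "w + w'"] exI[of _ "c + c'"])
      (auto simp: subspace_add[OF W] add_mem algebra_simps)
next
  fix k x assume k: "k \<in> K" and "x \<in> {w + c * u |w c. w \<in> W \<and> c \<in> K}"
  then obtain w c where "x = w + c * u" "w \<in> W" "c \<in> K" by blast
  then show "k * x \<in> {w + c * u |w c. w \<in> W \<and> c \<in> K}"
    using k by (intro CollectI exI[of _ "k * w"] exI[of _ "k * c"])
      (auto simp: subspace_smult[OF W] mult_mem algebra_simps)
qed

lemma card_subspace_extend:
  assumes W: "subspace_over K W" and u: "u \<notin> W"
  shows "card {w + c * u | w c. w \<in> W \<and> c \<in> K} = card W * card K"
proof -
  have "inj_on (\<lambda>(w, c). w + c * u) (W \<times> K)"
  proof (rule inj_onI, clarify)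
    fix w1 c1 w2 c2 assume w: "w1 \<in> W" "c1 \<in> K" "w2 \<in> W" "c2 \<in> K"
      and eq: "w1 + c1 * u = w2 + c2 * u"
    have "c1 = c2"
    proof (rule ccontr)
      assume "c1 \<noteq> c2"
      then have "u = inverse (c1 - c2) * (w2 - w1)"
        using eq by (simp add: field_simps)
      also have "\<dots> \<in> W"
        using w by (intro subspace_smult[OF W] inverse_mem diff_mem subspace_diff[OF W])
      finally show False using u by simp
    qed
    then show "w1 = w2 \<and> c1 = c2" using eq by simp
  qed
  moreover have "{w + c * u | w c. w \<in> W \<and> c \<in> K} = (\<lambda>(w, c). w + c * u) ` (W \<times> K)"
    by auto
  ultimately show ?thesis by (simp add: card_image card_cartesian_product)
qed

lemma subspace_over_card_ratio:
  assumes "subspace_over K W" "subspace_over K U" "W \<subseteq> U"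
  shows "\<exists>e. card U = card W * card K ^ e"
  using assms
proof (induction "card U - card W" arbitrary: W rule: less_induct)
  case less
  show ?case
  proof (cases "W = U")
    case False
    then obtain u where u: "u \<in> U" "u \<notin> W" using less.prems by blast
    define W' where "W' = {w + c * u | w c. w \<in> W \<and> c \<in> K}"
    have W': "subspace_over K W'" "card W' = card W * card K"
      unfolding W'_def using subspace_over_extend card_subspace_extend less.prems(1) u(2) by auto
    have "W' \<subseteq> U"
      unfolding W'_def using less.prems u subspace_add subspace_smult by blast
    moreover have "card W < card W'"
      using W'(2) card_ge_2 subspace_zero[OF less.prems(1)] by (auto simp: card_gt_0_iff)
    ultimately have "card U - card W' < card U - card W"
      using card_mono[of U W'] by simp
    then obtain e where "card U = card W' * card K ^ e"
      using less.hyps W'(1) less.prems(2) \<open>W' \<subseteq> U\<close> by blast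
    then show ?thesis using W'(2) by (intro exI[of _ "Suc e"]) (simp add: mult_ac)
  qed (intro exI[of _ 0], simp)
qed

lemma subspace_over_card: "subspace_over K U \<Longrightarrow> \<exists>e. card U = card K ^ e"
  using subspace_over_card_ratio[of "{0}" U] subspace_zero[of U]
  by (auto simp: subspace_over_def)

lemma subspace_over_card_psubset:
  assumes "subspace_over K W" "subspace_over K U" "W \<subset> U"
  shows "\<exists>e. card U = card W * card K ^ Suc e"
proof -
  obtain e where e: "card U = card W * card K ^ e"
    using subspace_over_card_ratio assms by blast
  moreover have "card W \<noteq> card U"
    using assms(3) by (metis card_subset_eq finite psubset_eq)
  ultimately show ?thesis by (cases e) auto
qed

end

locale finite_subfield_order = finite_subfield K for K :: "'a::{finite,field} set" +
  fixes q m :: nat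
  assumes card_eq: "card K = q ^ m"
begin

lemma q_ge_2: "2 \<le> q" and m_pos: "0 < m"
proof -
  have two: "2 \<le> q ^ m" using card_ge_2 card_eq by simp
  then show "0 < m" by (cases m) auto
  show "2 \<le> q"
  proof (rule ccontr)
    assume "\<not> 2 \<le> q"
    then have "q \<le> 1" by simp
    then have "q ^ m \<le> 1" using power_le_one[of q m] by simp
    then show False using two by simp
  qed
qed

lemma dimq_card_power: "card U = card K ^ e \<Longrightarrow> dimq q U = m * e"
  using dimq_eq[OF q_ge_2, of U "m * e"] by (simp add: card_eq power_mult)

lemma subspace_dist_self:
  assumes "subspace_over K U" shows "subspace_dist q U U = 0"
proof -
  have "subspace_sum U U = U"
    unfolding subspace_sum_def using subspace_add[OF assms] subspace_zero[OF assms] by force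
  then show ?thesis by (simp add: subspace_dist_def)
qed

lemma subspace_dist_ge:
  assumes U: "subspace_over K U" and V: "subspace_over K V"
    and card: "card U = card V" and ne: "U \<noteq> V"
  shows "2 * m \<le> subspace_dist q U V"
proof -
  define S I where "S = subspace_sum U V" and "I = U \<inter> V"
  have S: "subspace_over K S" and I: "subspace_over K I"
    unfolding S_def I_def by (simp_all add: subspace_over_subspace_sum subspace_over_Int U V)
  have "U \<subseteq> S" "V \<subseteq> S"
    unfolding S_def subspace_sum_def using subspace_zero[OF U] subspace_zero[OF V] by force+
  have "U \<noteq> S" using \<open>V \<subseteq> S\<close> card ne by (metis card_subset_eq finite)
  then have US: "U \<subset> S" using \<open>U \<subseteq> S\<close> by blast
  have "I \<noteq> U" unfolding I_def using card ne by (metis Int_absorb1 Int_lower2 card_subset_eq finite)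
  then have IU: "I \<subset> U" unfolding I_def by blast
  obtain c where c: "card I = card K ^ c" using subspace_over_card[OF I] by blast
  obtain e1 where e1: "card U = card I * card K ^ Suc e1"
    using subspace_over_card_psubset[OF I U IU] by blast
  obtain e2 where e2: "card S = card U * card K ^ Suc e2"
    using subspace_over_card_psubset[OF U S US] by blast
  have "card S = card K ^ (c + Suc e1 + Suc e2)" using c e1 e2 by (simp add: power_add)
  then have "dimq q S = m * (c + Suc e1 + Suc e2)" "dimq q I = m * c"
    using c by (simp_all only: dimq_card_power)
  then show ?thesis unfolding subspace_dist_def S_def[symmetric] I_def[symmetric]
    by (simp add: algebra_simps)
qed

lemma subspace_dist_le:
  assumes U: "subspace_over K U" and V: "subspace_over K V"
    and A: "A \<subseteq> U \<inter> V" "card A = card K ^ a"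
    and B: "subspace_sum U V \<subseteq> B" "card B = card K ^ b"
  shows "subspace_dist q U V \<le> m * b - m * a"
proof -
  obtain c where c: "card (U \<inter> V) = card K ^ c"
    using subspace_over_card[OF subspace_over_Int[OF U V]] by blast
  obtain d where d: "card (subspace_sum U V) = card K ^ d"
    using subspace_over_card[OF subspace_over_subspace_sum[OF U V]] by blast
  have "card K ^ a \<le> card K ^ c" "card K ^ d \<le> card K ^ b"
    using card_mono[OF _ A(1)] card_mono[OF _ B(1)] A(2) B(2) c d by simp_all
  then have "a \<le> c" "d \<le> b" using card_ge_2 by (simp_all add: power_le_imp_le_exp)
  then have "m * a \<le> m * c" "m * d \<le> m * b" by simp_all
  then show ?thesis unfolding subspace_dist_def dimq_card_power[OF c] dimq_card_power[OF d]
    by linarith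
qed

end

section \<open>Spans of the powers of an element\<close>

locale power_basis = finite_subfield_order K q m for K :: "'a::{finite,field} set" and q m +
  fixes b :: 'a
begin

abbreviation L :: nat where "L \<equiv> minpoly_degree K b"

lemma power_span_0: "power_span K b 0 = {0}"
  unfolding power_span_def by auto

lemma power_span_Suc:
  "power_span K b (Suc t) = {v + c * b ^ t | v c. v \<in> power_span K b t \<and> c \<in> K}"
proof (intro equalityI subsetI)
  fix y assume "y \<in> power_span K b (Suc t)"
  then obtain c where c: "\<forall>j<Suc t. c j \<in> K" "y = (\<Sum>j<Suc t. c j * b ^ j)"
    unfolding power_span_def by blast
  have "(\<Sum>j<t. c j * b ^ j) \<in> power_span K b t" unfolding power_span_def using c by auto
  then show "y \<in> {v + c * b ^ t | v c. v \<in> power_span K b t \<and> c \<in> K}" using c by auto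
next
  fix y assume "y \<in> {v + c * b ^ t | v c. v \<in> power_span K b t \<and> c \<in> K}"
  then obtain v c0 where v: "v \<in> power_span K b t" and c0: "c0 \<in> K" and y: "y = v + c0 * b ^ t"
    by blast
  obtain d where d: "\<forall>j<t. d j \<in> K" "v = (\<Sum>j<t. d j * b ^ j)"
    using v unfolding power_span_def by blast
  have "(\<Sum>j<t. (d(t := c0)) j * b ^ j) = (\<Sum>j<t. d j * b ^ j)" by (rule sum.cong) auto
  then have "y = (\<Sum>j<Suc t. (d(t := c0)) j * b ^ j)" using y d by simp
  moreover have "\<forall>j<Suc t. (d(t := c0)) j \<in> K" using d c0 by (auto simp: less_Suc_eq)
  ultimately show "y \<in> power_span K b (Suc t)" unfolding power_span_def by blast
qed

lemma power_span_SucI: "v \<in> power_span K b t \<Longrightarrow> c \<in> K \<Longrightarrow> v + c * b ^ t \<in> power_span K b (Suc t)"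
  unfolding power_span_Suc by blast

lemma subspace_over_power_span: "subspace_over K (power_span K b t)"
proof (induction t)
  case 0
  then show ?case by (simp add: power_span_0 subspace_over_def)
next
  case (Suc t)
  then show ?case unfolding power_span_Suc by (rule subspace_over_extend)
qed

lemma power_span_Suc_mono: "power_span K b t \<subseteq> power_span K b (Suc t)"
  using power_span_SucI[OF _ zero_mem] by fastforce

lemma power_span_mono: "s \<le> t \<Longrightarrow> power_span K b s \<subseteq> power_span K b t"
  using lift_Suc_mono_le[of "power_span K b", OF power_span_Suc_mono] by blast

lemma power_mem_power_span: "b ^ t \<in> power_span K b (Suc t)"
  using power_span_SucI[OF subspace_zero[OF subspace_over_power_span] one_mem] by simp

lemma power_span_1: "power_span K b 1 = K"
  by (auto simp: power_span_Suc[of 0, simplified] power_span_0)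

lemma one_mem_power_span: "1 \<le> t \<Longrightarrow> 1 \<in> power_span K b t"
  using power_span_mono[of 1 t] power_span_1 one_mem by auto

lemma power_span_mult_power:
  "v \<in> power_span K b t \<Longrightarrow> v * b ^ c \<in> power_span K b (t + c)"
proof (induction t arbitrary: v)
  case 0
  then show ?case using subspace_zero[OF subspace_over_power_span] by (simp add: power_span_0)
next
  case (Suc t)
  then obtain w k where w: "w \<in> power_span K b t" "k \<in> K" "v = w + k * b ^ t"
    unfolding power_span_Suc by blast
  have "v * b ^ c = w * b ^ c + k * b ^ (t + c)"
    using w(3) by (simp add: algebra_simps power_add)
  then show ?case using power_span_SucI[OF Suc.IH[OF w(1)] w(2)] by simp
qed

lemma algebraic: "\<exists>p. p \<noteq> 0 \<and> (\<forall>i. coeff p i \<in> K) \<and> poly p b = 0"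
proof -
  define N where "N = card (UNIV :: 'a set)"
  have "card {0::'a, 1} \<le> N" unfolding N_def by (rule card_mono) simp_all
  then have N: "1 < N" by simp
  define p :: "'a poly" where "p = monom 1 N - monom 1 1"
  have "coeff p N = 1" using N by (simp add: p_def coeff_monom)
  then have "p \<noteq> 0" by auto
  moreover have "coeff p i \<in> K" for i
    using N zero_mem one_mem diff_mem by (simp add: p_def coeff_monom)
  moreover have "poly p b = 0"
    using power_card_UNIV_eq_self[of b] by (simp add: p_def poly_monom N_def)
  ultimately show ?thesis by blast
qed

lemma minpoly_degree_le:
  assumes "p \<noteq> 0" "\<forall>i. coeff p i \<in> K" "poly p b = 0"
  shows "L \<le> degree p"
proof -
  have "\<exists>p'. p' \<noteq> 0 \<and> degree p' = degree p \<and> (\<forall>i. coeff p' i \<in> K) \<and> poly p' b = 0"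
    using assms by blast
  then show ?thesis unfolding minpoly_degree_def by (rule Least_le)
qed

lemma minpoly_degree_witness: "\<exists>p. p \<noteq> 0 \<and> degree p = L \<and> (\<forall>i. coeff p i \<in> K) \<and> poly p b = 0"
proof -
  obtain p where "p \<noteq> 0" "\<forall>i. coeff p i \<in> K" "poly p b = 0" using algebraic by blast
  then have "\<exists>d p. p \<noteq> 0 \<and> degree p = d \<and> (\<forall>i. coeff p i \<in> K) \<and> poly p b = 0" by blast
  from LeastI_ex[OF this] show ?thesis unfolding minpoly_degree_def .
qed

lemma power_notin_power_span:
  assumes "t < L" shows "b ^ t \<notin> power_span K b t"
proof
  assume "b ^ t \<in> power_span K b t"
  then obtain c where c: "\<forall>j<t. c j \<in> K" "b ^ t = (\<Sum>j<t. c j * b ^ j)"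
    unfolding power_span_def by blast
  define p :: "'a poly" where "p = monom 1 t - (\<Sum>j<t. monom (c j) j)"
  have coeff_p: "coeff p i = (if i = t then 1 else 0) - (if i < t then c i else 0)" for i
    unfolding p_def by (simp add: coeff_sum coeff_monom)
  then have "coeff p t = 1" by simp
  then have "p \<noteq> 0" by auto
  moreover have "\<forall>i. coeff p i \<in> K" using c(1) by (simp add: coeff_p zero_mem one_mem diff_mem)
  moreover have "poly p b = 0" using c(2) by (simp add: p_def poly_sum poly_monom)
  ultimately have "L \<le> degree p" by (rule minpoly_degree_le)
  moreover have "degree p \<le> t" by (rule degree_le) (simp add: coeff_p)
  ultimately show False using assms by simp
qed

lemma minpoly_degree_pos: "0 < L"
proof (rule ccontr)
  assume "\<not> 0 < L"
  then obtain p where "p \<noteq> 0" "degree p = 0" "poly p b = 0"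
    using minpoly_degree_witness by auto
  then show False using poly_zero by auto
qed

lemma power_minpoly_degree_mem: "b ^ L \<in> power_span K b L"
proof -
  obtain p where p: "p \<noteq> 0" "degree p = L" "\<forall>i. coeff p i \<in> K" "poly p b = 0"
    using minpoly_degree_witness by blast
  define a where "a = coeff p L"
  have a: "a \<noteq> 0" using p(1,2) unfolding a_def by (metis leading_coeff_0_iff)
  have "poly p b = (\<Sum>i\<le>degree p. coeff p i * b ^ i)" by (rule poly_altdef)
  also have "\<dots> = (\<Sum>i<L. coeff p i * b ^ i) + a * b ^ L"
    using p(2) by (simp add: a_def lessThan_Suc_atMost[symmetric])
  finally have root: "a * b ^ L = - (\<Sum>i<L. coeff p i * b ^ i)"
    using p(4) by (simp add: eq_neg_iff_add_eq_0 add.commute)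
  have "b ^ L = inverse a * (a * b ^ L)" using a by simp
  also have "\<dots> = (\<Sum>i<L. (- (inverse a * coeff p i)) * b ^ i)"
    unfolding root by (simp add: sum_distrib_left sum_negf mult.assoc)
  finally have "b ^ L = (\<Sum>i<L. (- (inverse a * coeff p i)) * b ^ i)" .
  moreover have "\<forall>i<L. - (inverse a * coeff p i) \<in> K"
    using p(3) by (auto intro!: mult_mem uminus_mem inverse_mem simp: a_def)
  ultimately show ?thesis
    unfolding power_span_def by (intro CollectI exI[of _ "\<lambda>i. - (inverse a * coeff p i)"] conjI)
qed

lemma card_power_span: "t \<le> L \<Longrightarrow> card (power_span K b t) = card K ^ t"
proof (induction t)
  case 0
  then show ?case by (simp add: power_span_0)
next
  case (Suc t)
  then show ?case unfolding power_span_Suc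
    using card_subspace_extend[OF subspace_over_power_span power_notin_power_span] by simp
qed

lemma power_span_minpoly_degree_mult_power:
  "x \<in> power_span K b L \<Longrightarrow> x * b ^ j \<in> power_span K b L"
proof (induction j)
  case (Suc j)
  have "x * b ^ Suc j \<in> power_span K b (Suc L)"
    using power_span_mult_power[OF Suc.IH[OF Suc.prems], of 1] by (simp add: mult_ac)
  then obtain v c where v: "v \<in> power_span K b L" "c \<in> K" "x * b ^ Suc j = v + c * b ^ L"
    unfolding power_span_Suc by blast
  then show ?case
    using subspace_add[OF subspace_over_power_span v(1)]
      subspace_smult[OF subspace_over_power_span v(2) power_minpoly_degree_mem] by simp
qed simp

lemma power_span_minpoly_degree_mult:
  assumes x: "x \<in> power_span K b L" and y: "y \<in> power_span K b L"
  shows "x * y \<in> power_span K b L"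
proof -
  obtain c where c: "\<forall>j<L. c j \<in> K" "y = (\<Sum>j<L. c j * b ^ j)"
    using y unfolding power_span_def by blast
  have "x * y = (\<Sum>j<L. c j * (x * b ^ j))"
    unfolding c(2) by (simp add: sum_distrib_left mult_ac)
  also have "\<dots> \<in> power_span K b L"
    using c(1) power_span_minpoly_degree_mult_power[OF x]
    by (intro subspace_sum_mem[OF subspace_over_power_span])
      (auto intro: subspace_smult[OF subspace_over_power_span])
  finally show ?thesis .
qed

lemma scale_power_span_minpoly_degree:
  assumes "y \<in> power_span K b L" "y \<noteq> 0"
  shows "scale (power_span K b L) y = power_span K b L"
proof -
  have "scale (power_span K b L) y \<subseteq> power_span K b L"
    unfolding scale_def using power_span_minpoly_degree_mult assms(1) by blast
  then show ?thesis using card_scale[OF assms(2)] by (metis card_subset_eq finite)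
qed

lemma power_span_minpoly_degree_eq_subfield: "power_span K b L = subfield_of_order q (m * L)"
proof -
  have "1 < card K ^ L" using card_ge_2 minpoly_degree_pos by (intro one_less_power) auto
  then have "power_span K b L = {x. x ^ card (power_span K b L) = x}"
    by (intro mult_closed_eq_fixed_points subspace_zero[OF subspace_over_power_span]
        power_span_minpoly_degree_mult) (simp_all add: card_power_span)
  then show ?thesis by (simp add: card_power_span card_eq subfield_of_order_def power_mult)
qed

lemma minpoly_degree_le_of_card_UNIV:
  assumes "card (UNIV :: 'a set) = card K ^ s"
  shows "L \<le> s"
proof (rule ccontr)
  assume "\<not> L \<le> s"
  then have "card (power_span K b (Suc s)) = card K ^ Suc s" by (simp add: card_power_span)
  moreover have "card (power_span K b (Suc s)) \<le> card K ^ s"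
    using assms card_mono[of UNIV "power_span K b (Suc s)"] by simp
  ultimately show False using card_ge_2 by simp
qed

lemma notin_subfield_if_degree_gt_1: "1 < L \<Longrightarrow> b \<notin> K"
  using power_notin_power_span[of 1] power_span_1 by simp

lemma power_span_stabilizer_step:
  assumes t: "t < L" and stab: "\<And>z. z \<in> power_span K b t \<Longrightarrow> z * y \<in> power_span K b t"
    and u: "1 \<le> u" "Suc u \<le> t" and y: "y \<in> power_span K b (Suc u)"
  shows "y \<in> power_span K b u"
proof -
  \<comment> \<open>multiplying \<open>y\<close> by \<open>b^(t-u)\<close> shifts its top coefficient to \<open>b^t \<notin> V_t\<close>\<close>
  obtain v c where v: "v \<in> power_span K b u" "c \<in> K" "y = v + c * b ^ u"
    using y unfolding power_span_Suc by blast
  have "Suc (t - u) \<le> t" using u by linarith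
  then have "b ^ (t - u) \<in> power_span K b t"
    using power_mem_power_span[of "t - u"] power_span_mono[of "Suc (t - u)" t] by blast
  then have "b ^ (t - u) * y \<in> power_span K b t" by (rule stab)
  moreover have "v * b ^ (t - u) \<in> power_span K b t"
    using power_span_mult_power[OF v(1), of "t - u"] u by simp
  moreover have "b ^ (t - u) * y = v * b ^ (t - u) + c * b ^ t"
    using v(3) u by (simp add: algebra_simps flip: power_add)
  ultimately have "c * b ^ t \<in> power_span K b t"
    using subspace_diff[OF subspace_over_power_span] by fastforce
  have "c = 0"
  proof (rule ccontr)
    assume "c \<noteq> 0"
    then have "b ^ t = inverse c * (c * b ^ t)" by simp
    also have "\<dots> \<in> power_span K b t"
      by (rule subspace_smult[OF subspace_over_power_span inverse_mem[OF v(2)]]) fact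
    finally show False using power_notin_power_span[OF t] by simp
  qed
  then show ?thesis using v by simp
qed

lemma power_span_stabilizer:
  assumes t: "1 \<le> t" "t < L" and stab: "scale (power_span K b t) y \<subseteq> power_span K b t"
  shows "y \<in> K"
proof -
  have mult: "z * y \<in> power_span K b t" if "z \<in> power_span K b t" for z
    using stab that unfolding scale_def by blast
  have "y \<in> power_span K b (t - k)" if "k < t" for k
    using that
  proof (induction k)
    case 0
    show ?case using mult[OF one_mem_power_span[OF t(1)]] by simp
  next
    case (Suc k)
    then have y: "y \<in> power_span K b (Suc (t - Suc k))" by (simp add: Suc_diff_Suc)
    show ?case
      by (rule power_span_stabilizer_step[OF t(2) mult _ _ y]) (use Suc.prems in auto)
  qed
  from this[of "t - 1"] show ?thesis using t(1) power_span_1 by simp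
qed

lemma subspace_dist_scale_power_span:
  assumes t: "1 \<le> t" "t < L"
  shows "subspace_dist q (power_span K b t) (scale (power_span K b t) b) \<le> 2 * m"
proof -
  have b: "b \<noteq> 0" using notin_subfield_if_degree_gt_1 zero_mem t by auto
  define A where "A = scale (power_span K b (t - 1)) b"
  have "A \<subseteq> power_span K b t \<inter> scale (power_span K b t) b"
    unfolding A_def scale_def
    using power_span_mult_power[of _ "t - 1" 1] power_span_mono[of "t - 1" t] t by auto
  moreover have "card A = card K ^ (t - 1)"
    unfolding A_def using card_scale[OF b] card_power_span t by simp
  moreover have "subspace_sum (power_span K b t) (scale (power_span K b t) b) \<subseteq> power_span K b (Suc t)"
    unfolding subspace_sum_def scale_def
    using power_span_Suc_mono power_span_mult_power[of _ t 1]
      subspace_add[OF subspace_over_power_span] by fastforce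
  moreover have "card (power_span K b (Suc t)) = card K ^ Suc t"
    using card_power_span t by simp
  ultimately have "subspace_dist q (power_span K b t) (scale (power_span K b t) b) \<le> m * Suc t - m * (t - 1)"
    by (intro subspace_dist_le subspace_over_power_span subspace_over_scale)
  also have "\<dots> = 2 * m" using t by (cases t) (auto simp: algebra_simps)
  finally show ?thesis .
qed

lemma power_span_not_subfield:
  assumes "2 \<le> t" "t < L" shows "\<not> is_subfield (power_span K b t)"
proof -
  have "b \<in> power_span K b t"
    using power_mem_power_span[of 1] power_span_mono[of "Suc 1" t] assms by auto
  moreover have "b ^ (t - 1) \<in> power_span K b t"
    using power_mem_power_span[of "t - 1"] assms by simp
  moreover have "b * b ^ (t - 1) \<notin> power_span K b t"
    using power_notin_power_span[of t] assms by (simp flip: power_Suc)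
  ultimately show ?thesis unfolding is_subfield_def by blast
qed

end

section \<open>Orbits of flags\<close>

lemma card_eq_card_image_mult:
  assumes "finite A" "\<And>a. a \<in> A \<Longrightarrow> card {x\<in>A. g x = g a} = k"
  shows "card A = card (g ` A) * k"
proof -
  have "card A = card (\<Union>z\<in>g ` A. {x\<in>A. g x = z})" by (rule arg_cong[of _ _ card]) auto
  also have "\<dots> = (\<Sum>z\<in>g ` A. card {x\<in>A. g x = z})"
    by (rule card_UN_disjoint) (use assms(1) in auto)
  also have "\<dots> = (\<Sum>z\<in>g ` A. k)" using assms(2) by (intro sum.cong) auto
  finally show ?thesis by simp
qed

definition scale_flag :: "'a::field set list \<Rightarrow> 'a \<Rightarrow> 'a set list" where
  "scale_flag F y = map (\<lambda>U. scale U y) F"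

lemma length_scale_flag [simp]: "length (scale_flag F y) = length F"
  by (simp add: scale_flag_def)

lemma nth_scale_flag [simp]: "i < length F \<Longrightarrow> scale_flag F y ! i = scale (F ! i) y"
  by (simp add: scale_flag_def)

lemma scale_flag_scale_flag: "scale_flag (scale_flag F a) c = scale_flag F (a * c)"
  by (simp add: scale_flag_def scale_scale)

lemma scale_flag_one [simp]: "scale_flag F 1 = F"
  by (simp add: scale_flag_def)

lemma flag_dist_scale_flag:
  fixes G H :: "'a::{finite,field} set list"
  assumes "c \<noteq> 0" "length G = length H"
  shows "flag_dist q (scale_flag G c) (scale_flag H c) = flag_dist q G H"
  unfolding flag_dist_def using assms by (simp add: subspace_dist_scale)

lemma orbit_flag_eq:
  assumes "primitive_element \<alpha>" "\<alpha> \<noteq> 0"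
  shows "orbit_flag \<alpha> F = scale_flag F ` (UNIV - {0})"
proof (intro equalityI subsetI)
  fix G assume "G \<in> orbit_flag \<alpha> F"
  then obtain j where "G = scale_flag F (\<alpha> ^ j)"
    unfolding orbit_flag_def scale_flag_def scale_def by blast
  then show "G \<in> scale_flag F ` (UNIV - {0})" using assms(2) by simp
next
  fix G assume "G \<in> scale_flag F ` (UNIV - {0})"
  then obtain y where "y \<noteq> 0" "G = scale_flag F y" by blast
  moreover obtain j where "y = \<alpha> ^ j"
    using assms(1) \<open>y \<noteq> 0\<close> unfolding primitive_element_def by blast
  ultimately show "G \<in> orbit_flag \<alpha> F" unfolding orbit_flag_def scale_flag_def scale_def by blast
qed

lemma orbit_flag_distances:
  assumes "primitive_element \<alpha>" "\<alpha> \<noteq> 0"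
  shows "{flag_dist q G H | G H. G \<in> orbit_flag \<alpha> F \<and> H \<in> orbit_flag \<alpha> F \<and> G \<noteq> H}
       = {flag_dist q F (scale_flag F y) | y. y \<noteq> 0 \<and> scale_flag F y \<noteq> F}"
proof (intro equalityI subsetI)
  fix d assume "d \<in> {flag_dist q G H | G H. G \<in> orbit_flag \<alpha> F \<and> H \<in> orbit_flag \<alpha> F \<and> G \<noteq> H}"
  then obtain a c where ac: "a \<noteq> 0" "c \<noteq> 0" "scale_flag F a \<noteq> scale_flag F c"
      "d = flag_dist q (scale_flag F a) (scale_flag F c)"
    unfolding orbit_flag_eq[OF assms] by blast
  have "d = flag_dist q F (scale_flag F (c / a))"
    using flag_dist_scale_flag[of "inverse a" "scale_flag F a" "scale_flag F c" q] ac
    by (simp add: scale_flag_scale_flag divide_inverse mult.commute)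
  moreover have "scale_flag F (c / a) \<noteq> F"
  proof
    assume "scale_flag F (c / a) = F"
    then have "scale_flag (scale_flag F (c / a)) a = scale_flag F a" by simp
    then show False using ac by (simp add: scale_flag_scale_flag)
  qed
  ultimately show "d \<in> {flag_dist q F (scale_flag F y) | y. y \<noteq> 0 \<and> scale_flag F y \<noteq> F}"
    using ac by auto
next
  fix d assume "d \<in> {flag_dist q F (scale_flag F y) | y. y \<noteq> 0 \<and> scale_flag F y \<noteq> F}"
  then obtain y where y: "y \<noteq> 0" "scale_flag F y \<noteq> F" "d = flag_dist q F (scale_flag F y)"
    by blast
  have "F \<in> orbit_flag \<alpha> F" "scale_flag F y \<in> orbit_flag \<alpha> F"
    unfolding orbit_flag_eq[OF assms] using y(1) image_eqI[of F "scale_flag F" 1] by auto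
  then show "d \<in> {flag_dist q G H | G H. G \<in> orbit_flag \<alpha> F \<and> H \<in> orbit_flag \<alpha> F \<and> G \<noteq> H}"
    using y by (intro CollectI exI[of _ F] exI[of _ "scale_flag F y"]) auto
qed

section \<open>The flags of the theorem\<close>

lemma if_le_half_eq_min: "(if t \<le> n div 2 then t else n - t) = min t (n - (t::nat))"
  by auto

locale power_span_flag = power_basis K q m b for K :: "'a::{finite,field} set" and q m b +
  fixes ss :: "nat list" and s n :: nat and \<alpha> :: 'a
  assumes length_ss: "2 \<le> length ss" and ss_first: "1 \<le> ss ! 0"
    and ss_sorted: "sorted_wrt (<) ss"
    and ss_last_le: "ss ! (length ss - 1) \<le> L" and ss_last_less: "ss ! (length ss - 1) < s"
    and card_UNIV: "card (UNIV :: 'a set) = q ^ n" and n_eq: "n = m * s"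
    and primitive: "primitive_element \<alpha>"
begin

abbreviation flag :: "'a set list" where
  "flag \<equiv> map (power_span K b) ss"

lemma ss_nonempty [simp]: "ss \<noteq> []"
  using length_ss by auto

lemma ss_less: "i < j \<Longrightarrow> j < length ss \<Longrightarrow> ss ! i < ss ! j"
  using sorted_wrt_nth_less[OF ss_sorted] .

lemma ss_le_last:
  assumes "i < length ss" shows "ss ! i \<le> ss ! (length ss - 1)"
proof (cases "i = length ss - 1")
  case False
  then have "i < length ss - 1" using assms by linarith
  then show ?thesis using assms by (intro less_imp_le ss_less) auto
qed simp

lemma ss_bounds: "i < length ss \<Longrightarrow> 1 \<le> ss ! i \<and> ss ! i \<le> L \<and> ss ! i < s"
  using ss_le_last ss_last_le ss_last_less ss_first ss_less[of 0 i] by (cases i) force+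

lemma ss_below_last_less:
  assumes "i < length ss - 1" shows "ss ! i < L"
proof -
  have "ss ! i < ss ! (length ss - 1)" by (rule ss_less) (use assms in auto)
  then show ?thesis using ss_last_le by simp
qed

lemma minpoly_degree_ge_2: "2 \<le> L"
  using ss_below_last_less[of 0] ss_first length_ss by simp

lemma b_notin: "b \<notin> K" and b_nonzero: "b \<noteq> 0"
  using notin_subfield_if_degree_gt_1 minpoly_degree_ge_2 zero_mem by auto

lemma s_ge_3: "3 \<le> s"
  using ss_less[of 0 1] ss_bounds[of 1] ss_first length_ss by simp

lemma card_UNIV_eq: "card (UNIV :: 'a set) = card K ^ s"
  by (simp add: card_UNIV card_eq n_eq power_mult)

lemma alpha_nonzero: "\<alpha> \<noteq> 0"
proof (rule primitive_element_nonzero[OF primitive])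
  have "card K ^ 1 < card K ^ s" using card_ge_2 s_ge_3 by (subst power_strict_increasing_iff) auto
  then show "2 < card (UNIV :: 'a set)" using card_ge_2 by (simp add: card_UNIV_eq)
qed

lemma flag_type_eq: "flag_type q flag = map ((*) m) ss"
  unfolding flag_type_def using ss_bounds
  by (auto simp: dimq_card_power card_power_span in_set_conv_nth)

lemma scale_power_span_eq_self_iff:
  assumes "i < length ss" "ss ! i < L" "y \<noteq> 0"
  shows "scale (power_span K b (ss ! i)) y = power_span K b (ss ! i) \<longleftrightarrow> y \<in> K"
  using power_span_stabilizer[of "ss ! i" y] scale_eq_self[OF subspace_over_power_span, of y]
    ss_bounds assms by auto

lemma scale_flag_eq_self_iff:
  assumes "y \<noteq> 0" shows "scale_flag flag y = flag \<longleftrightarrow> y \<in> K"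
proof
  assume "scale_flag flag y = flag"
  then have "scale_flag flag y ! 0 = flag ! 0" by simp
  then have "scale (power_span K b (ss ! 0)) y = power_span K b (ss ! 0)"
    using nth_scale_flag[of 0 flag y] by simp
  then show "y \<in> K"
    using scale_power_span_eq_self_iff[of 0 y] ss_below_last_less[of 0] length_ss assms by simp
qed (use assms scale_eq_self[OF subspace_over_power_span] in \<open>simp add: scale_flag_def\<close>)

abbreviation cost :: "nat \<Rightarrow> nat" where
  "cost i \<equiv> if ss ! i < L then 2 * m else 0"

lemma subspace_dist_scale_ge_cost:
  assumes i: "i < length ss" and y: "y \<noteq> 0" "y \<notin> K"
  shows "cost i \<le> subspace_dist q (power_span K b (ss ! i)) (scale (power_span K b (ss ! i)) y)"
proof (cases "ss ! i < L")
  case True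
  then show ?thesis
    using scale_power_span_eq_self_iff[OF i True y(1)] y card_scale[OF y(1)]
    by (simp add: subspace_dist_ge subspace_over_power_span subspace_over_scale)
qed simp

lemma subspace_dist_scale_b_le_cost:
  assumes i: "i < length ss"
  shows "subspace_dist q (power_span K b (ss ! i)) (scale (power_span K b (ss ! i)) b) \<le> cost i"
proof (cases "ss ! i < L")
  case True
  then show ?thesis using subspace_dist_scale_power_span ss_bounds[OF i] by simp
next
  case False
  then have L: "ss ! i = L" using ss_bounds[OF i] by simp
  have "b \<in> power_span K b L"
    using power_mem_power_span[of 1] power_span_mono[of "Suc 1" L] minpoly_degree_ge_2 by auto
  then show ?thesis
    using L scale_power_span_minpoly_degree b_nonzero subspace_dist_self[OF subspace_over_power_span] by simp
qed

lemma code_min_dist_eq_sum: "code_min_dist q (orbit_flag \<alpha> flag) = (\<Sum>i<length ss. cost i)"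
proof -
  define D where "D = {flag_dist q flag (scale_flag flag y) | y. y \<noteq> 0 \<and> scale_flag flag y \<noteq> flag}"
  have dist: "flag_dist q flag (scale_flag flag y) =
      (\<Sum>i<length ss. subspace_dist q (power_span K b (ss ! i)) (scale (power_span K b (ss ! i)) y))"
    for y unfolding flag_dist_def by simp
  have "code_min_dist q (orbit_flag \<alpha> flag) = Min D"
    unfolding code_min_dist_def orbit_flag_distances[OF primitive alpha_nonzero] D_def ..
  moreover have "finite D" unfolding D_def by simp
  moreover have "(\<Sum>i<length ss. cost i) \<le> d" if "d \<in> D" for d
  proof -
    obtain y where "y \<noteq> 0" "scale_flag flag y \<noteq> flag" "d = flag_dist q flag (scale_flag flag y)"
      using \<open>d \<in> D\<close> unfolding D_def by blast
    then show ?thesis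
      using scale_flag_eq_self_iff subspace_dist_scale_ge_cost unfolding dist by (auto intro: sum_mono)
  qed
  moreover have "flag_dist q flag (scale_flag flag b) \<in> D"
    using b_notin b_nonzero scale_flag_eq_self_iff
    unfolding D_def by (intro CollectI exI[of _ b]) auto
  moreover have "flag_dist q flag (scale_flag flag b) \<le> (\<Sum>i<length ss. cost i)"
    unfolding dist by (intro sum_mono subspace_dist_scale_b_le_cost) simp
  ultimately show ?thesis by (metis Min_in Min_le antisym empty_iff)
qed

lemma code_min_dist_eq:
  "code_min_dist q (orbit_flag \<alpha> flag) = 2 * m * (length ss - 1) + cost (length ss - 1)"
proof -
  have "{..<length ss} = insert (length ss - 1) {..<length ss - 1}"
    using length_ss by auto
  then have "(\<Sum>i<length ss. cost i) = cost (length ss - 1) + (\<Sum>i<length ss - 1. cost i)"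
    by simp
  also have "(\<Sum>i<length ss - 1. cost i) = 2 * m * (length ss - 1)"
    using ss_below_last_less by simp
  finally show ?thesis using code_min_dist_eq_sum by simp
qed

lemma ss_eq_pair: "length ss = 2 \<Longrightarrow> ss = [ss ! 0, ss ! 1]"
  by (cases ss; cases "tl ss") auto

lemma length_ss_eq_2_if_flag_type:
  "flag_type q flag = [x, y] \<Longrightarrow> length ss = 2 \<and> m * ss ! 0 = x \<and> m * ss ! 1 = y"
  unfolding flag_type_eq by (cases ss; cases "tl ss") auto

lemma code_min_dist_eq_2m_iff_pair:
  "code_min_dist q (orbit_flag \<alpha> flag) = 2 * m \<longleftrightarrow> length ss = 2 \<and> ss ! 1 = L"
proof -
  have "2 * m * (length ss - 1) + cost (length ss - 1) = 2 * m \<longleftrightarrow>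
      length ss - 1 = 1 \<and> \<not> ss ! (length ss - 1) < L"
    using m_pos length_ss by (cases "length ss - 1 = 1") auto
  then show ?thesis unfolding code_min_dist_eq using ss_last_le length_ss by auto
qed

lemma code_min_dist_eq_2m_iff:
  "code_min_dist q (orbit_flag \<alpha> flag) = 2 * m \<longleftrightarrow>
     (\<exists>s1. 1 \<le> s1 \<and> s1 < L \<and> L < s \<and> flag_type q flag = [m * s1, m * L])"
proof
  assume "code_min_dist q (orbit_flag \<alpha> flag) = 2 * m"
  then have "length ss = 2" "ss ! 1 = L" using code_min_dist_eq_2m_iff_pair by auto
  then have "map ((*) m) ss = map ((*) m) [ss ! 0, L]" using ss_eq_pair by metis
  then show "\<exists>s1. 1 \<le> s1 \<and> s1 < L \<and> L < s \<and> flag_type q flag = [m * s1, m * L]"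
    using \<open>length ss = 2\<close> \<open>ss ! 1 = L\<close> ss_first ss_below_last_less[of 0] ss_last_less
    by (intro exI[of _ "ss ! 0"]) (simp add: flag_type_eq)
next
  assume "\<exists>s1. 1 \<le> s1 \<and> s1 < L \<and> L < s \<and> flag_type q flag = [m * s1, m * L]"
  then have "length ss = 2" "ss ! 1 = L"
    using length_ss_eq_2_if_flag_type m_pos by auto
  then show "code_min_dist q (orbit_flag \<alpha> flag) = 2 * m"
    using code_min_dist_eq_2m_iff_pair by simp
qed

lemma flag_eq_Galois_flag:
  assumes "code_min_dist q (orbit_flag \<alpha> flag) = 2 * m" "ss ! 0 = 1"
  shows "flag = [K, subfield_of_order q (m * L)]"
proof -
  have "ss = [1, L]" using code_min_dist_eq_2m_iff_pair ss_eq_pair assms by metis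
  then show ?thesis by (simp only: list.map power_span_1 power_span_minpoly_degree_eq_subfield)
qed

lemma optimum_bound_eq:
  "(\<Sum>t\<leftarrow>flag_type q flag. if t \<le> n div 2 then t else n - t) =
     m * (\<Sum>i<length ss. min (ss ! i) (s - ss ! i))"
proof -
  have "(\<Sum>t\<leftarrow>flag_type q flag. if t \<le> n div 2 then t else n - t) = (\<Sum>x\<leftarrow>ss. m * min x (s - x))"
    unfolding flag_type_eq if_le_half_eq_min n_eq
    by (simp add: comp_def nat_mult_min_right diff_mult_distrib2)
  also have "\<dots> = m * (\<Sum>i<length ss. min (ss ! i) (s - ss ! i))"
    by (subst sum_list_const_mult, subst sum_list_sum_nth) (simp add: atLeast0LessThan)
  finally show ?thesis .
qed

lemma ss_eq_if_min_eq_1: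
  assumes "\<forall>i<length ss. min (ss ! i) (s - ss ! i) = 1"
  shows "ss = [1, s - 1]"
proof -
  have ends: "ss ! i = 1 \<or> ss ! i = s - 1" if "i < length ss" for i
    using assms that ss_bounds[OF that] by (auto simp: min_def split: if_splits)
  have "ss ! 0 < ss ! 1" "ss ! 1 < s" using ss_less[of 0 1] ss_bounds[of 1] length_ss by auto
  then have first: "ss ! 0 = 1" and second: "ss ! 1 = s - 1"
    using ends[of 0] ends[of 1] length_ss by auto
  have "length ss = 2"
  proof (rule ccontr)
    assume "length ss \<noteq> 2"
    then have "2 < length ss" using length_ss by simp
    then show False using ss_less[of 1 2] ss_bounds[of 2] second by simp arith
  qed
  then show ?thesis using ss_eq_pair first second by simp
qed

lemma optimum_iff_pair:
  "optimum_distance_flag_code q n (flag_type q flag) (orbit_flag \<alpha> flag) \<longleftrightarrow>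
     ss = [1, s - 1] \<and> s - 1 < L"
proof -
  define h where "h i = min (ss ! i) (s - ss ! i)" for i
  have h_ge: "1 \<le> h i" if "i < length ss" for i using ss_bounds[OF that] by (simp add: h_def) arith
  define c where "c = (if ss ! (length ss - 1) < L then 1 else 0 :: nat)"
  have "2 * m * (length ss - 1) + cost (length ss - 1) = (2 * m) * ((length ss - 1) + c)"
    by (simp add: c_def algebra_simps)
  then have "optimum_distance_flag_code q n (flag_type q flag) (orbit_flag \<alpha> flag) \<longleftrightarrow>
      (2 * m) * ((length ss - 1) + c) = (2 * m) * (\<Sum>i<length ss. h i)"
    unfolding optimum_distance_flag_code_def code_min_dist_eq optimum_bound_eq h_def
    by (simp add: mult.assoc)
  also have "\<dots> \<longleftrightarrow> (length ss - 1) + c = (\<Sum>i<length ss. h i)"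
    using m_pos by simp
  also have "\<dots> \<longleftrightarrow> ss ! (length ss - 1) < L \<and> (\<forall>i<length ss. h i = 1)"
  proof -
    have "length ss \<le> (\<Sum>i<length ss. h i)"
      using sum_mono[of "{..<length ss}" "\<lambda>_. 1" h] h_ge by simp
    moreover have "(\<Sum>i<length ss. h i) - length ss = (\<Sum>i<length ss. h i - 1)"
      using sum_subtractf_nat[of "{..<length ss}" "\<lambda>_. 1" h] h_ge by simp
    moreover have "(\<Sum>i<length ss. h i - 1) = 0 \<longleftrightarrow> (\<forall>i<length ss. h i = 1)"
      using h_ge by (force simp: le_antisym)
    ultimately show ?thesis using length_ss by (auto simp: c_def)
  qed
  also have "\<dots> \<longleftrightarrow> ss = [1, s - 1] \<and> s - 1 < L"
    using ss_eq_if_min_eq_1 s_ge_3 by (auto simp: h_def less_Suc_eq)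
  finally show ?thesis .
qed

lemma optimum_iff:
  "optimum_distance_flag_code q n (flag_type q flag) (orbit_flag \<alpha> flag) \<longleftrightarrow>
     L = s \<and> flag_type q flag = [m, m * (L - 1)]"
proof
  assume "optimum_distance_flag_code q n (flag_type q flag) (orbit_flag \<alpha> flag)"
  then have "ss = [1, s - 1]" "s - 1 < L" using optimum_iff_pair by auto
  moreover have "L \<le> s" using minpoly_degree_le_of_card_UNIV[OF card_UNIV_eq] .
  ultimately have "L = s" by linarith
  moreover have "flag_type q flag = map ((*) m) [1, s - 1]"
    unfolding flag_type_eq by (simp only: \<open>ss = [1, s - 1]\<close>)
  ultimately show "L = s \<and> flag_type q flag = [m, m * (L - 1)]" by simp
next
  assume "L = s \<and> flag_type q flag = [m, m * (L - 1)]"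
  then have "length ss = 2" "ss ! 0 = 1" "ss ! 1 = s - 1" "L = s"
    using length_ss_eq_2_if_flag_type[of m "m * (L - 1)"] m_pos by auto
  then show "optimum_distance_flag_code q n (flag_type q flag) (orbit_flag \<alpha> flag)"
    using optimum_iff_pair ss_eq_pair s_ge_3 by simp
qed

lemma optimum_generalized_Galois_flag:
  assumes "optimum_distance_flag_code q n (flag_type q flag) (orbit_flag \<alpha> flag)"
  shows "generalized_Galois_flag flag"
proof -
  have "ss = [1, L - 1]" "L = s" using assms optimum_iff_pair optimum_iff by auto
  then have "flag = [K, power_span K b (L - 1)]"
    by (simp only: list.map power_span_1)
  then show ?thesis
    using is_subfield power_span_not_subfield[of "L - 1"] \<open>L = s\<close> s_ge_3
    unfolding generalized_Galois_flag_def by auto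
qed

lemma card_orbit_flag: "card (orbit_flag \<alpha> flag) = (q ^ n - 1) div (q ^ m - 1)"
proof -
  have fibre: "card {x \<in> UNIV - {0}. scale_flag flag x = scale_flag flag a} = card K - 1"
    if a: "a \<in> UNIV - {0}" for a
  proof -
    have "{x \<in> UNIV - {0}. scale_flag flag x = scale_flag flag a} = (\<lambda>c. c * a) ` (K - {0})"
    proof (intro equalityI subsetI)
      fix x assume "x \<in> {x \<in> UNIV - {0}. scale_flag flag x = scale_flag flag a}"
      then have x: "x \<noteq> 0" "scale_flag flag x = scale_flag flag a" by auto
      have "scale_flag flag (x * inverse a) = scale_flag (scale_flag flag a) (inverse a)"
        using x(2) by (metis scale_flag_scale_flag)
      also have "\<dots> = flag" using a by (simp add: scale_flag_scale_flag)
      finally have "x * inverse a \<in> K - {0}"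
        using scale_flag_eq_self_iff x(1) a by simp
      moreover have "x = (x * inverse a) * a" using a by simp
      ultimately show "x \<in> (\<lambda>c. c * a) ` (K - {0})" by blast
    next
      fix x assume "x \<in> (\<lambda>c. c * a) ` (K - {0})"
      then obtain c where c: "c \<in> K" "c \<noteq> 0" "x = c * a" by blast
      then have "scale_flag flag x = scale_flag (scale_flag flag c) a"
        by (simp add: scale_flag_scale_flag)
      then show "x \<in> {x \<in> UNIV - {0}. scale_flag flag x = scale_flag flag a}"
        using c a scale_flag_eq_self_iff[OF c(2)] by simp
    qed
    moreover have "card ((\<lambda>c. c * a) ` (K - {0})) = card (K - {0})"
      using a by (intro card_image) (auto simp: inj_on_def)
    ultimately show ?thesis using zero_mem by (simp add: card_Diff_singleton)
  qed
  have "card (UNIV - {0::'a}) = card (scale_flag flag ` (UNIV - {0})) * (card K - 1)"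
    by (rule card_eq_card_image_mult) (use fibre in auto)
  then have "q ^ n - 1 = card (orbit_flag \<alpha> flag) * (q ^ m - 1)"
    by (simp add: orbit_flag_eq[OF primitive alpha_nonzero] card_Diff_singleton card_UNIV card_eq)
  moreover have "0 < q ^ m - 1" using card_ge_2 card_eq by simp
  ultimately show ?thesis by simp
qed

end

lemma power_span_flag_subfield_of_order:
  fixes \<alpha> b :: "'a::{finite,field}"
  assumes q: "prime_power q" and card: "card (UNIV :: 'a set) = q ^ n" and mn: "m dvd n"
    and prim: "primitive_element \<alpha>"
    and ss: "2 \<le> length ss" "1 \<le> ss ! 0" "\<forall>i. Suc i < length ss \<longrightarrow> ss ! i < ss ! Suc i"
      "ss ! (length ss - 1) \<le> minpoly_degree (subfield_of_order q m) b"
      "ss ! (length ss - 1) < n div m"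
  shows "power_span_flag (subfield_of_order q m) q m b ss (n div m) n \<alpha>"
proof -
  have sorted: "sorted_wrt (<) ss"
    using ss(3) by (simp add: sorted_wrt_iff_nth_Suc_transp)
  have "ss ! 1 \<le> ss ! (length ss - 1)"
  proof (cases "length ss = 2")
    case False
    then have "1 < length ss - 1" using ss(1) by linarith
    then show ?thesis by (intro less_imp_le sorted_wrt_nth_less[OF sorted]) auto
  qed simp
  moreover have "ss ! 0 < ss ! 1" using ss(1,3) by simp
  ultimately have "2 < n div m" using ss(2,5) by linarith
  then have "2 < n" by (metis div_le_dividend order.strict_trans2)
  then have "q ^ 1 < q ^ n"
    using prime_power_ge_2[OF q] by (subst power_strict_increasing_iff) auto
  then have "\<alpha> \<noteq> 0" using primitive_element_nonzero[OF prim] card prime_power_ge_2[OF q] by simp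
  interpret finite_subfield_order "subfield_of_order q m :: 'a set" q m
    by unfold_locales (rule is_subfield_subfield_of_order[OF q card],
        rule card_subfield_of_order[OF q card mn prim \<open>\<alpha> \<noteq> 0\<close>])
  show ?thesis
    by unfold_locales (use ss sorted card mn prim in auto)
qed

theorem mainTheorem8:
  fixes \<alpha> :: "'a::{finite,field}" and q n m l :: nat and ss :: "nat list"
  defines "s \<equiv> n div m"
      and "L \<equiv> minpoly_degree (subfield_of_order q m :: 'a set) (\<alpha> ^ l)"
      and "r \<equiv> length ss"
      and "F \<equiv> map (\<lambda>si. power_span (subfield_of_order q m) (\<alpha> ^ l) si) ss"
  assumes q: "prime_power q" and card: "card (UNIV :: 'a set) = q ^ n"
      and mn: "m dvd n"
      and prim: "primitive_element \<alpha>"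
      and l: "1 \<le> l" "l < (q ^ n - 1) div (q ^ m - 1)"
      and r: "r \<ge> 2"
      and s_pos: "1 \<le> ss ! 0"
      and s_inc: "\<forall>i. Suc i < r \<longrightarrow> ss ! i < ss ! Suc i"
      and s_L: "ss ! (r - 1) \<le> L"
      and s_s: "ss ! (r - 1) < s"
  shows "(code_min_dist q (orbit_flag \<alpha> F) = 2 * m \<longleftrightarrow>
           (\<exists>s1. 1 \<le> s1 \<and> s1 < L \<and> L < s \<and> flag_type q F = [m * s1, m * L]))
       \<and> ((code_min_dist q (orbit_flag \<alpha> F) = 2 * m \<and> ss ! 0 = 1) \<longrightarrow>
           F = [subfield_of_order q m, subfield_of_order q (m * L)])
       \<and> (optimum_distance_flag_code q n (flag_type q F) (orbit_flag \<alpha> F) \<longleftrightarrow>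
           (L = s \<and> flag_type q F = [m, m * (L - 1)]))
       \<and> (optimum_distance_flag_code q n (flag_type q F) (orbit_flag \<alpha> F) \<longrightarrow>
           generalized_Galois_flag F \<and> card (orbit_flag \<alpha> F) = (q ^ n - 1) div (q ^ m - 1))"
proof -
  interpret flag: power_span_flag "subfield_of_order q m" q m "\<alpha> ^ l" ss s n \<alpha>
    unfolding s_def
    by (rule power_span_flag_subfield_of_order[OF q card mn prim]) (use r s_pos s_inc s_L s_s in
        \<open>simp_all add: r_def L_def s_def\<close>)
  have F: "F = flag.flag" by (simp add: F_def)
  show ?thesis
    unfolding F L_def
    using flag.code_min_dist_eq_2m_iff flag.flag_eq_Galois_flag flag.optimum_iff
      flag.optimum_generalized_Galois_flag flag.card_orbit_flag
    by blast
qed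

end
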